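(* Let $\Sigma\subseteq\mathbb{C}$ be a nonempty compact set, $L$ a bounded band operator on $\ell^2(\mathbb{Z})$ with $LS=SL$, $\gamma\in\mathbb{Z}$, and for $u\in\Sigma^{\mathbb{Z}}$ let $H(u):=L+S^\gamma M_u$, with band-width $w$. Let $b\in\Sigma^{\mathbb{Z}}$ with $\mathcal{W}(b)=\mathcal{W}(b|_{\mathbb{N}})$. Then for all $\lambda\in\mathbb{C}$, \[ \|(H(b)^+-\lambda)^{-1}\|\ge\|(H(b)-\lambda)^{-1}\|,\qquad\text{so that}\qquad \sigma(H(b)^+)\supseteq\sigma(H(b)), \] and, with $T=H(b)-\lambda$, for all $N\in\mathbb{N}$, \[ \nu_N(T^+)=\min\Big\{\min_{j=1}^{w}\nu_{j..j+N-1}(T^+),\ \nu_N(T)\Big\}. \]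
   Context: $\mathbb{N}=\{1,2,\dots\}$, $(Sx)_n=x_{n-1}$, $(M_ux)_n=u_nx_n$; a band operator on $\ell^2(\mathbb{Z})$ is a bounded matrix operator with $A_{ij}=0$ for $|i-j|>w$ (the band-width). $\mathcal{W}(u)$ is the set of all finite subwords (blocks of consecutive entries) of a sequence $u$; $b|_{\mathbb{N}}$ is the restriction of $b$ to $\mathbb{N}$. For an operator $A$ on $\ell^2(\mathbb{Z})$, $A^+$ is its compression to $\ell^2(\mathbb{N})$ (matrix $(A_{ij})_{i,j\in\mathbb{N}}$). $\nu_N(T):=\inf\{\|Tx\|:\|x\|=1,\operatorname{diam}(\operatorname{supp}x)<N\}$; for $l,r\in\mathbb{N}$, $\nu_{l..r}(T^+)$ is the smallest singular value of the submatrix $(T^+_{ij})_{i\in1..r+w,\,j\in l..r}$. $\|B^{-1}\|:=\infty$ if $B$ is not invertible. *)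

theory Defs
  imports "HOL-Analysis.Analysis"
begin

text \<open>Operators on l2(Z) and on
  l2(N) (N = {1,2,...}) are both represented by int-indexed matrices acting on
  square-summable sequences supported in a carrier set I (I = UNIV for l2(Z),
  I = {1..} for l2(N)). The compression A^+ of A is A acting on carrier {1..}.\<close>

type_synonym imat = "int \<Rightarrow> int \<Rightarrow> complex"
type_synonym iseq = "int \<Rightarrow> complex"

definition l2 :: "int set \<Rightarrow> iseq set" where
  "l2 I = {x. (\<forall>i. i \<notin> I \<longrightarrow> x i = 0) \<and> (\<lambda>i. (cmod (x i))\<^sup>2) summable_on UNIV}"

definition l2norm :: "iseq \<Rightarrow> real" where
  "l2norm x = sqrt (\<Sum>\<^sub>\<infinity>i. (cmod (x i))\<^sup>2)"

definition mapply :: "imat \<Rightarrow> int set \<Rightarrow> iseq \<Rightarrow> iseq" where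
  "mapply A I x = (\<lambda>i. if i \<in> I then (\<Sum>\<^sub>\<infinity>j\<in>I. A i j * x j) else 0)"

definition mmult :: "imat \<Rightarrow> imat \<Rightarrow> imat" where
  "mmult A B = (\<lambda>i j. \<Sum>\<^sub>\<infinity>k. A i k * B k j)"

definition madd :: "imat \<Rightarrow> imat \<Rightarrow> imat" where
  "madd A B = (\<lambda>i j. A i j + B i j)"

definition mshift :: "imat \<Rightarrow> complex \<Rightarrow> imat" where
  "mshift A z = (\<lambda>i j. A i j - (if i = j then z else 0))"

definition band_width :: "nat \<Rightarrow> imat \<Rightarrow> bool" where
  "band_width w A \<longleftrightarrow> (\<forall>i j. \<bar>i - j\<bar> > int w \<longrightarrow> A i j = 0)"

definition bounded_op :: "imat \<Rightarrow> int set \<Rightarrow> bool" where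
  "bounded_op A I \<longleftrightarrow> (\<exists>C. \<forall>x\<in>l2 I. mapply A I x \<in> l2 I \<and> l2norm (mapply A I x) \<le> C * l2norm x)"

definition band_op :: "imat \<Rightarrow> bool" where
  "band_op A \<longleftrightarrow> (\<exists>w. band_width w A) \<and> bounded_op A UNIV"

definition shift :: imat where
  "shift = (\<lambda>i j. if j = i - 1 then 1 else 0)"

definition shift_pow :: "int \<Rightarrow> imat" where
  "shift_pow \<gamma> = (\<lambda>i j. if j = i - \<gamma> then 1 else 0)"

definition mult_op :: "iseq \<Rightarrow> imat" where
  "mult_op u = (\<lambda>i j. if i = j then u i else 0)"

definition invertible_on :: "imat \<Rightarrow> int set \<Rightarrow> bool" where
  "invertible_on A I \<longleftrightarrow> bounded_op A I \<and> bij_betw (mapply A I) (l2 I) (l2 I) \<and>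
     (\<exists>C. \<forall>y\<in>l2 I. l2norm (the_inv_into (l2 I) (mapply A I) y) \<le> C * l2norm y)"

definition inv_norm :: "imat \<Rightarrow> int set \<Rightarrow> ereal" where
  "inv_norm A I = (if invertible_on A I
      then Sup {ereal (l2norm (the_inv_into (l2 I) (mapply A I) y)) | y. y \<in> l2 I \<and> l2norm y = 1}
      else \<infinity>)"

definition spectrum_on :: "imat \<Rightarrow> int set \<Rightarrow> complex set" where
  "spectrum_on A I = {z. \<not> invertible_on (mshift A z) I}"

definition nu :: "nat \<Rightarrow> imat \<Rightarrow> int set \<Rightarrow> real" where
  "nu N A I = Inf {l2norm (mapply A I x) | x. x \<in> l2 I \<and> l2norm x = 1 \<and>
      (\<forall>i j. x i \<noteq> 0 \<longrightarrow> x j \<noteq> 0 \<longrightarrow> \<bar>i - j\<bar> < int N)}"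

text \<open>nu_{l..r}(A^+): smallest singular value of the finite (r+w) x (r-l+1) submatrix
  (A_ij), i in 1..r+w, j in l..r (number of rows >= number of columns), i.e.
  min over unit vectors x in C^{l..r} of the Euclidean norm of the product.\<close>
definition nu_win :: "nat \<Rightarrow> imat \<Rightarrow> int \<Rightarrow> int \<Rightarrow> real" where
  "nu_win w A l r = Inf {sqrt (\<Sum>i\<in>{1..r + int w}. (cmod (\<Sum>k\<in>{l..r}. A i k * x k))\<^sup>2) | x.
      (\<Sum>k\<in>{l..r}. (cmod (x k))\<^sup>2) = 1}"

definition subwords :: "int set \<Rightarrow> iseq \<Rightarrow> complex list set" where
  "subwords I b = {map (\<lambda>k. b (i + int k)) [0..<n] | i n. \<forall>k<n. i + int k \<in> I}"

definition Nplus :: "int set" where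
  "Nplus = {1..}"

end

theory Submission
  imports Defs "HOL-Library.Diagonal_Subsequence"
begin

(* T = H(b) - \<lambda> is a band matrix whose j-th column depends, up to translation, only on b_j,
  and every finite subword of b recurs in b|N arbitrarily far to the right. Hence a finitely
  supported vector can be translated into N, beyond the band-width, so that T^+ acts on the
  translate exactly as T acts on the vector. This gives the formula for nu_N: a unit vector in
  l2(N) of support diameter < N either starts at some j <= w, where T^+ acts through a window
  matrix, or starts beyond w, where T^+ agrees with T.
  If T^+ is invertible, the bound ||v|| <= ||(T^+)^-1|| ||T^+ v|| transfers to finitely
  supported vectors and, by density, to all of l2(Z). Surjectivity of T follows by solving
  T^+ v = y for translated truncations of y and passing to a pointwise limit along a diagonal
  subsequence. *)

section \<open>Square-summable sequences\<close>

lemma l2norm_nonneg: "0 \<le> l2norm x"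
  unfolding l2norm_def by (simp add: infsum_nonneg)

lemma l2norm_squared: "(l2norm x)\<^sup>2 = (\<Sum>\<^sub>\<infinity>i. (cmod (x i))\<^sup>2)"
  unfolding l2norm_def by (simp add: infsum_nonneg)

lemma l2_summable: "x \<in> l2 I \<Longrightarrow> (\<lambda>i. (cmod (x i))\<^sup>2) summable_on UNIV"
  by (simp add: l2_def)

lemma sum_le_l2norm_squared:
  assumes "(\<lambda>i. (cmod (x i))\<^sup>2) summable_on UNIV" "finite F"
  shows "(\<Sum>i\<in>F. (cmod (x i))\<^sup>2) \<le> (l2norm x)\<^sup>2"
  unfolding l2norm_squared by (rule finite_sum_le_infsum[OF assms]) auto

lemma L2_set_le_l2norm:
  assumes "(\<lambda>i. (cmod (x i))\<^sup>2) summable_on UNIV" "finite F"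
  shows "L2_set (\<lambda>i. cmod (x i)) F \<le> l2norm x"
  using sum_le_l2norm_squared[OF assms] l2norm_nonneg[of x]
  unfolding L2_set_def by (metis real_le_lsqrt sum_nonneg zero_le_power2)

lemma norm_le_l2norm:
  assumes "(\<lambda>i. (cmod (x i))\<^sup>2) summable_on UNIV"
  shows "cmod (x j) \<le> l2norm x"
  using L2_set_le_l2norm[OF assms, of "{j}"] by simp

lemma l2_bound_from_finite_sums:
  assumes "\<And>F. finite F \<Longrightarrow> (\<Sum>i\<in>F. (cmod (x i))\<^sup>2) \<le> B\<^sup>2" and "0 \<le> B"
  shows "(\<lambda>i. (cmod (x i))\<^sup>2) summable_on UNIV" "l2norm x \<le> B"
proof -
  show summable: "(\<lambda>i. (cmod (x i))\<^sup>2) summable_on UNIV"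
    by (rule nonneg_bdd_above_summable_on) (auto intro!: bdd_aboveI assms(1))
  have "(l2norm x)\<^sup>2 \<le> B\<^sup>2"
    unfolding l2norm_squared by (rule infsum_le_finite_sums[OF summable]) (rule assms(1))
  then show "l2norm x \<le> B"
    using \<open>0 \<le> B\<close> by (rule power2_le_imp_le)
qed

lemma l2norm_finite_support:
  assumes "finite F" "\<And>i. i \<notin> F \<Longrightarrow> x i = 0"
  shows "(\<lambda>i. (cmod (x i))\<^sup>2) summable_on UNIV" "l2norm x = sqrt (\<Sum>i\<in>F. (cmod (x i))\<^sup>2)"
proof -
  have "((\<lambda>i. (cmod (x i))\<^sup>2) has_sum (\<Sum>i\<in>F. (cmod (x i))\<^sup>2)) UNIV"
    by (rule has_sum_finite_neutralI) (use assms in auto)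
  then show "(\<lambda>i. (cmod (x i))\<^sup>2) summable_on UNIV" "l2norm x = sqrt (\<Sum>i\<in>F. (cmod (x i))\<^sup>2)"
    unfolding l2norm_def by (auto simp: has_sum_imp_summable infsumI)
qed

lemma l2_finite_support:
  assumes "finite F" "F \<subseteq> I" "\<And>i. i \<notin> F \<Longrightarrow> x i = 0"
  shows "x \<in> l2 I"
  using l2norm_finite_support(1)[of F x] assms unfolding l2_def by auto

lemma l2_unit_vector:
  assumes "p \<in> I"
  shows "(\<lambda>i. if i = p then 1 else 0) \<in> l2 I" "l2norm (\<lambda>i. if i = p then 1 else 0) = 1"
  using l2_finite_support[of "{p}" I] l2norm_finite_support(2)[of "{p}"] assms by auto

lemma l2norm_zero: "l2norm (\<lambda>i. 0) = 0"
  unfolding l2norm_def by simp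

lemma l2norm_eq_0:
  assumes "x \<in> l2 I" "l2norm x = 0"
  shows "x = (\<lambda>i. 0)"
  using norm_le_l2norm[OF l2_summable[OF assms(1)]] assms(2) by fastforce

lemma bij_translate: "bij (\<lambda>i::int. i + c)"
  by (rule bij_betwI[where g="\<lambda>i. i - c"]) auto

lemma l2norm_translate: "l2norm (\<lambda>i. x (i + c)) = l2norm x"
  using infsum_reindex_bij_betw[OF bij_translate, of "\<lambda>i. (cmod (x i))\<^sup>2" c]
  unfolding l2norm_def by simp

lemma summable_translate:
  fixes x :: iseq
  shows "(\<lambda>i. (cmod (x (i + c)))\<^sup>2) summable_on UNIV \<longleftrightarrow> (\<lambda>i. (cmod (x i))\<^sup>2) summable_on UNIV"
  using summable_on_reindex_bij_betw[OF bij_translate, of "\<lambda>i. (cmod (x i))\<^sup>2" c] by simp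

lemma l2_scale:
  assumes "x \<in> l2 I"
  shows "(\<lambda>i. c * x i) \<in> l2 I" "l2norm (\<lambda>i. c * x i) = cmod c * l2norm x"
proof -
  have sq: "(\<lambda>i. (cmod (c * x i))\<^sup>2) = (\<lambda>i. (cmod c)\<^sup>2 * (cmod (x i))\<^sup>2)"
    by (simp add: norm_mult power_mult_distrib)
  show "(\<lambda>i. c * x i) \<in> l2 I"
    using assms unfolding l2_def mem_Collect_eq sq by (auto intro: summable_on_cmult_right)
  show "l2norm (\<lambda>i. c * x i) = cmod c * l2norm x"
    unfolding l2norm_def sq infsum_cmult_right' by (simp add: real_sqrt_mult)
qed

lemma l2norm_triangle_pointwise:
  assumes x: "(\<lambda>i. (cmod (x i))\<^sup>2) summable_on UNIV"
    and y: "(\<lambda>i. (cmod (y i))\<^sup>2) summable_on UNIV"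
    and z: "\<And>i. cmod (z i) \<le> cmod (x i) + cmod (y i)"
  shows "(\<lambda>i. (cmod (z i))\<^sup>2) summable_on UNIV" "l2norm z \<le> l2norm x + l2norm y"
proof -
  have finite_sums: "(\<Sum>i\<in>F. (cmod (z i))\<^sup>2) \<le> (l2norm x + l2norm y)\<^sup>2" if "finite F" for F
  proof -
    have "L2_set (\<lambda>i. cmod (z i)) F \<le> L2_set (\<lambda>i. cmod (x i) + cmod (y i)) F"
      by (rule L2_set_mono) (use z in auto)
    also have "\<dots> \<le> L2_set (\<lambda>i. cmod (x i)) F + L2_set (\<lambda>i. cmod (y i)) F"
      by (rule L2_set_triangle_ineq)
    also have "\<dots> \<le> l2norm x + l2norm y"
      using L2_set_le_l2norm[OF x that] L2_set_le_l2norm[OF y that] by simp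
    finally show ?thesis
      unfolding L2_set_def by (rule sqrt_le_D)
  qed
  have "0 \<le> l2norm x + l2norm y"
    by (simp add: l2norm_nonneg add_nonneg_nonneg)
  then show "(\<lambda>i. (cmod (z i))\<^sup>2) summable_on UNIV" "l2norm z \<le> l2norm x + l2norm y"
    using l2_bound_from_finite_sums[OF finite_sums] by auto
qed

lemma l2_diff:
  assumes "x \<in> l2 I" "y \<in> l2 I"
  shows "(\<lambda>i. x i - y i) \<in> l2 I"
  using l2norm_triangle_pointwise(1)[OF l2_summable[OF assms(1)] l2_summable[OF assms(2)]
      norm_triangle_ineq4] assms
  unfolding l2_def by auto

lemma l2norm_mono_pointwise:
  assumes "(\<lambda>i. (cmod (y i))\<^sup>2) summable_on UNIV" "\<And>i. cmod (x i) \<le> cmod (y i)"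
  shows "l2norm x \<le> l2norm y"
  using l2norm_triangle_pointwise(2)[of y "\<lambda>i. 0" x] assms
  by (simp add: l2norm_zero)

lemma l2norm_tail_small:
  assumes summable: "(\<lambda>i. (cmod (x i))\<^sup>2) summable_on UNIV" and "0 < \<epsilon>"
  obtains n where "l2norm (\<lambda>i. if \<bar>i\<bar> \<le> n then 0 else x i) \<le> \<epsilon>"
proof -
  define f where "f i = (cmod (x i))\<^sup>2" for i
  have f: "f summable_on UNIV" "\<And>i. 0 \<le> f i"
    using summable by (simp_all add: f_def[abs_def])
  obtain F where F: "finite F" "dist (sum f F) (infsum f UNIV) \<le> \<epsilon>\<^sup>2"
    using infsum_finite_approximation[OF f(1), of "\<epsilon>\<^sup>2"] \<open>0 < \<epsilon>\<close> by auto
  define n where "n = Max (abs ` F)"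
  have F_le_n: "\<bar>i\<bar> \<le> n" if "i \<in> F" for i
    using F(1) that by (auto simp: n_def)
  have "(\<Sum>i\<in>G. (cmod (if \<bar>i\<bar> \<le> n then 0 else x i))\<^sup>2) \<le> \<epsilon>\<^sup>2" if "finite G" for G
  proof -
    define G' where "G' = {i \<in> G. n < \<bar>i\<bar>}"
    have "finite G'" "F \<inter> G' = {}"
      using that by (auto simp: G'_def dest: F_le_n)
    have "(\<Sum>i\<in>G. (cmod (if \<bar>i\<bar> \<le> n then 0 else x i))\<^sup>2) = sum f G'"
      unfolding G'_def f_def using that by (intro sum.mono_neutral_cong_right) auto
    also have "\<dots> = sum f (F \<union> G') - sum f F"
      using \<open>finite G'\<close> \<open>F \<inter> G' = {}\<close> F(1) by (simp add: sum.union_disjoint)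
    also have "\<dots> \<le> infsum f UNIV - sum f F"
      using finite_sum_le_infsum[OF f(1)] F(1) \<open>finite G'\<close> f(2) by simp
    also have "\<dots> \<le> \<epsilon>\<^sup>2"
      using F(2) by (simp add: dist_real_def)
    finally show ?thesis .
  qed
  then show ?thesis
    using l2_bound_from_finite_sums(2) \<open>0 < \<epsilon>\<close> by (metis less_imp_le that)
qed

lemma l2_split_finite_support:
  assumes x: "x \<in> l2 UNIV" and "0 < \<epsilon>"
  obtains n xt t where "\<And>k. k \<notin> {- n..n} \<Longrightarrow> xt k = 0" "xt \<in> l2 UNIV" "t \<in> l2 UNIV"
    "l2norm t \<le> \<epsilon>" "\<And>k. x k = xt k + t k"
proof -
  obtain n where tail: "l2norm (\<lambda>i. if \<bar>i\<bar> \<le> n then 0 else x i) \<le> \<epsilon>"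
    using l2norm_tail_small[OF l2_summable[OF x] \<open>0 < \<epsilon>\<close>] by blast
  define xt where "xt = (\<lambda>i. if \<bar>i\<bar> \<le> n then x i else 0)"
  have xt_zero: "\<And>k. k \<notin> {- n..n} \<Longrightarrow> xt k = 0"
    by (auto simp: xt_def)
  then have "xt \<in> l2 UNIV"
    by (intro l2_finite_support[of "{- n..n}"]) auto
  have tail_eq: "(\<lambda>i. if \<bar>i\<bar> \<le> n then 0 else x i) = (\<lambda>i. x i - xt i)"
    by (auto simp: xt_def)
  show ?thesis
  proof (rule that[of n xt "\<lambda>i. x i - xt i"])
    show "(\<lambda>i. x i - xt i) \<in> l2 UNIV"
      using l2_diff[OF x \<open>xt \<in> l2 UNIV\<close>] .
    show "l2norm (\<lambda>i. x i - xt i) \<le> \<epsilon>"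
      using tail unfolding tail_eq .
  qed (simp_all add: xt_zero \<open>xt \<in> l2 UNIV\<close>)
qed

lemma pointwise_convergent_subseq:
  fixes X :: "nat \<Rightarrow> int \<Rightarrow> complex"
  assumes bounded: "\<And>n j. cmod (X n j) \<le> B"
  obtains \<phi> x where "strict_mono \<phi>" "\<And>j. (\<lambda>k. X (\<phi> k) j) \<longlonglongrightarrow> x j"
proof -
  define P where "P n s = convergent (\<lambda>k. X (s k) (int_decode n))" for n and s :: "nat \<Rightarrow> nat"
  interpret subseqs P
  proof
    fix n and s :: "nat \<Rightarrow> nat"
    have "bounded (range (\<lambda>k. X (s k) (int_decode n)))"
      unfolding bounded_iff using bounded by blast
    from bounded_imp_convergent_subsequence[OF this] obtain l r where
      "strict_mono r" "((\<lambda>k. X (s k) (int_decode n)) \<circ> r) \<longlonglongrightarrow> l"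
      by blast
    then show "\<exists>r'. strict_mono r' \<and> P n (s \<circ> r')"
      unfolding P_def convergent_def by (auto simp: o_def)
  qed
  have "convergent (\<lambda>k. X (diagseq k) j)" for j
  proof -
    define n where "n = int_encode j"
    have "P n (diagseq \<circ> ((+) (Suc n)))"
    proof (rule diagseq_holds)
      fix r s :: "nat \<Rightarrow> nat" and n
      assume "strict_mono r" "P n s"
      then show "P n (s \<circ> r)"
        unfolding P_def using convergent_subseq_convergent[of "\<lambda>k. X (s k) (int_decode n)" r]
        by (simp add: o_def)
    qed
    then obtain L where "(\<lambda>k. X (diagseq (k + Suc n)) j) \<longlonglongrightarrow> L"
      unfolding P_def n_def convergent_def by (auto simp: o_def add.commute)
    then show ?thesis
      unfolding convergent_def by (blast intro: LIMSEQ_offset)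
  qed
  then show ?thesis
    using that[of diagseq "\<lambda>j. lim (\<lambda>k. X (diagseq k) j)"] subseq_diagseq
    by (auto simp: convergent_LIMSEQ_iff)
qed

lemma l2norm_le_pointwise_limit:
  assumes lim: "\<And>j. (\<lambda>k. X k j) \<longlonglongrightarrow> x j"
    and summable: "\<And>k. (\<lambda>i. (cmod (X k i))\<^sup>2) summable_on UNIV"
    and bound: "\<And>k. l2norm (X k) \<le> B"
  shows "(\<lambda>i. (cmod (x i))\<^sup>2) summable_on UNIV" "l2norm x \<le> B"
proof -
  have "(\<Sum>j\<in>F. (cmod (x j))\<^sup>2) \<le> B\<^sup>2" if "finite F" for F
  proof (rule LIMSEQ_le_const2)
    show "(\<lambda>k. \<Sum>j\<in>F. (cmod (X k j))\<^sup>2) \<longlonglongrightarrow> (\<Sum>j\<in>F. (cmod (x j))\<^sup>2)"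
      by (intro tendsto_sum tendsto_power tendsto_norm lim)
    show "\<exists>N. \<forall>k\<ge>N. (\<Sum>j\<in>F. (cmod (X k j))\<^sup>2) \<le> B\<^sup>2"
      using sum_le_l2norm_squared[OF summable that] bound l2norm_nonneg
      by (meson order_trans power_mono)
  qed
  moreover have "0 \<le> B"
    using l2norm_nonneg bound order_trans by blast
  ultimately show "(\<lambda>i. (cmod (x i))\<^sup>2) summable_on UNIV" "l2norm x \<le> B"
    using l2_bound_from_finite_sums by blast+
qed

section \<open>Band matrices\<close>

lemma mapply_finite_support:
  assumes "finite S" "S \<subseteq> I" "\<And>k. k \<notin> S \<Longrightarrow> x k = 0"
  shows "mapply A I x i = (if i \<in> I then (\<Sum>k\<in>S. A i k * x k) else 0)"
proof -
  have "(\<Sum>\<^sub>\<infinity>k\<in>I. A i k * x k) = (\<Sum>\<^sub>\<infinity>k\<in>S. A i k * x k)"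
    by (rule infsum_cong_neutral) (use assms in auto)
  then show ?thesis
    unfolding mapply_def using assms(1) by simp
qed

lemma mapply_band:
  assumes "band_width w A"
  shows "mapply A I x i = (if i \<in> I then (\<Sum>k\<in>{i - int w..i + int w} \<inter> I. A i k * x k) else 0)"
proof -
  have "(\<Sum>\<^sub>\<infinity>k\<in>I. A i k * x k) = (\<Sum>\<^sub>\<infinity>k\<in>{i - int w..i + int w} \<inter> I. A i k * x k)"
    by (rule infsum_cong_neutral) (use assms in \<open>auto simp: band_width_def\<close>)
  then show ?thesis
    unfolding mapply_def by simp
qed

lemma mapply_band_UNIV:
  "band_width w A \<Longrightarrow> mapply A UNIV x i = (\<Sum>k\<in>{i - int w..i + int w}. A i k * x k)"
  by (simp add: mapply_band)

lemma mapply_zero: "mapply A I (\<lambda>k. 0) = (\<lambda>i. 0)"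
  by (simp add: mapply_def fun_eq_iff)

lemma mapply_scale: "mapply A I (\<lambda>k. c * x k) = (\<lambda>i. c * mapply A I x i)"
proof
  fix i
  have "(\<Sum>\<^sub>\<infinity>k\<in>I. A i k * (c * x k)) = (\<Sum>\<^sub>\<infinity>k\<in>I. c * (A i k * x k))"
    by (simp add: algebra_simps)
  also have "\<dots> = c * (\<Sum>\<^sub>\<infinity>k\<in>I. A i k * x k)"
    by (rule infsum_cmult_right')
  finally show "mapply A I (\<lambda>k. c * x k) i = c * mapply A I x i"
    unfolding mapply_def by simp
qed

lemma mapply_diff:
  assumes "band_width w A"
  shows "mapply A I (\<lambda>k. x k - y k) = (\<lambda>i. mapply A I x i - mapply A I y i)"
  unfolding mapply_band[OF assms] by (simp add: fun_eq_iff right_diff_distrib sum_subtractf)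

lemma band_matrix_row_estimate:
  assumes band: "band_width w A" and entries: "\<And>i j. cmod (A i j) \<le> K"
  shows "(cmod (mapply A UNIV x i))\<^sup>2
    \<le> (2 * real w + 1) * K\<^sup>2 * (\<Sum>d\<in>{- int w..int w}. (cmod (x (i + d)))\<^sup>2)"
proof -
  define D where "D = {- int w..int w}"
  have "mapply A UNIV x i = (\<Sum>d\<in>D. A i (i + d) * x (i + d))"
    unfolding mapply_band_UNIV[OF band] D_def
    by (rule sum.reindex_bij_witness[where i="\<lambda>d. i + d" and j="\<lambda>k. k - i"]) auto
  then have "cmod (mapply A UNIV x i) \<le> (\<Sum>d\<in>D. cmod (A i (i + d) * x (i + d)))"
    by (simp add: norm_sum)
  also have "\<dots> \<le> (\<Sum>d\<in>D. K * cmod (x (i + d)))"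
    by (rule sum_mono) (simp add: norm_mult mult_right_mono entries)
  finally have "(cmod (mapply A UNIV x i))\<^sup>2 \<le> (\<Sum>d\<in>D. K * cmod (x (i + d)))\<^sup>2"
    by (simp add: power_mono)
  also have "\<dots> \<le> (\<Sum>d\<in>D. (K * cmod (x (i + d)))\<^sup>2) * card D"
    by (rule sum_squared_le_sum_of_squares)
  also have "\<dots> = K\<^sup>2 * (\<Sum>d\<in>D. (cmod (x (i + d)))\<^sup>2) * card D"
    by (simp add: power_mult_distrib sum_distrib_left)
  also have "\<dots> = (2 * real w + 1) * K\<^sup>2 * (\<Sum>d\<in>D. (cmod (x (i + d)))\<^sup>2)"
    by (simp add: D_def ac_simps)
  finally show ?thesis
    by (simp add: D_def)
qed

lemma band_matrix_l2_bounded: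
  assumes band: "band_width w A" and entries: "\<And>i j. cmod (A i j) \<le> K" and x: "x \<in> l2 UNIV"
  shows "mapply A UNIV x \<in> l2 UNIV" "l2norm (mapply A UNIV x) \<le> (2 * real w + 1) * K * l2norm x"
proof -
  define D where "D = {- int w..int w}"
  have "0 \<le> K"
    using entries[of 0 0] norm_ge_zero order_trans by blast
  have finite_sums: "(\<Sum>i\<in>F. (cmod (mapply A UNIV x i))\<^sup>2) \<le> ((2 * real w + 1) * K * l2norm x)\<^sup>2"
    if "finite F" for F
  proof -
    have "(\<Sum>i\<in>F. (cmod (mapply A UNIV x i))\<^sup>2)
        \<le> (\<Sum>i\<in>F. (2 * real w + 1) * K\<^sup>2 * (\<Sum>d\<in>D. (cmod (x (i + d)))\<^sup>2))"
      unfolding D_def by (rule sum_mono) (rule band_matrix_row_estimate[OF band entries])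
    also have "\<dots> = (2 * real w + 1) * K\<^sup>2 * (\<Sum>d\<in>D. \<Sum>i\<in>F. (cmod (x (i + d)))\<^sup>2)"
      by (simp add: sum_distrib_left sum.swap[of _ F D])
    also have "\<dots> \<le> (2 * real w + 1) * K\<^sup>2 * (\<Sum>d\<in>D. (l2norm x)\<^sup>2)"
      using sum_le_l2norm_squared[OF iffD2[OF summable_translate l2_summable[OF x]] that]
      by (intro mult_left_mono sum_mono) (simp_all add: l2norm_translate)
    also have "\<dots> = ((2 * real w + 1) * K * l2norm x)\<^sup>2"
      by (simp add: D_def power2_eq_square algebra_simps)
    finally show ?thesis .
  qed
  have "0 \<le> (2 * real w + 1) * K * l2norm x"
    using \<open>0 \<le> K\<close> by (simp add: l2norm_nonneg)
  from l2_bound_from_finite_sums[OF finite_sums this]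
  show "mapply A UNIV x \<in> l2 UNIV" "l2norm (mapply A UNIV x) \<le> (2 * real w + 1) * K * l2norm x"
    by (simp_all add: l2_def)
qed

lemma l2norm_mapply_window:
  assumes band: "band_width w A" and "1 \<le> l" and x: "\<And>k. k \<notin> {l..r} \<Longrightarrow> x k = 0"
  shows "l2norm (mapply A Nplus x) = sqrt (\<Sum>i\<in>{1..r + int w}. (cmod (\<Sum>k\<in>{l..r}. A i k * x k))\<^sup>2)"
proof -
  have Ax: "mapply A Nplus x i = (if 1 \<le> i then (\<Sum>k\<in>{l..r}. A i k * x k) else 0)" for i
    using mapply_finite_support[of "{l..r}" Nplus x A i] x \<open>1 \<le> l\<close> by (auto simp: Nplus_def)
  have "mapply A Nplus x i = 0" if "i \<notin> {1..r + int w}" for i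
  proof (cases "1 \<le> i")
    case True
    then have "A i k = 0" if "k \<in> {l..r}" for k
      using band \<open>i \<notin> {1..r + int w}\<close> that by (auto simp: band_width_def)
    then show ?thesis
      using Ax by simp
  qed (simp add: Ax)
  then have "l2norm (mapply A Nplus x) = sqrt (\<Sum>i\<in>{1..r + int w}. (cmod (mapply A Nplus x i))\<^sup>2)"
    by (intro l2norm_finite_support(2)) auto
  also have "\<dots> = sqrt (\<Sum>i\<in>{1..r + int w}. (cmod (\<Sum>k\<in>{l..r}. A i k * x k))\<^sup>2)"
    by (simp add: Ax)
  finally show ?thesis .
qed

section \<open>Inverses and lower norms\<close>

lemma inv_norm_eq_ereal:
  assumes inv: "invertible_on A I" and "p \<in> I"
  obtains m where "0 \<le> m" "inv_norm A I = ereal m"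
    "\<And>y. y \<in> l2 I \<Longrightarrow> l2norm y = 1 \<Longrightarrow> l2norm (the_inv_into (l2 I) (mapply A I) y) \<le> m"
proof -
  define R where "R = the_inv_into (l2 I) (mapply A I)"
  obtain C where C: "\<And>y. y \<in> l2 I \<Longrightarrow> l2norm (R y) \<le> C * l2norm y"
    using inv unfolding invertible_on_def R_def by blast
  define S where "S = {ereal (l2norm (R y)) | y. y \<in> l2 I \<and> l2norm y = 1}"
  have inv_norm: "inv_norm A I = Sup S"
    using inv unfolding inv_norm_def S_def R_def by simp
  have "Sup S \<le> ereal C"
    by (rule Sup_least) (auto simp: S_def dest: C)
  moreover have "0 \<le> Sup S"
  proof -
    define e where "e = (\<lambda>i. if i = p then 1 else 0 :: complex)"
    have "ereal (l2norm (R e)) \<in> S"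
      using l2_unit_vector[OF \<open>p \<in> I\<close>] unfolding S_def e_def by blast
    then show ?thesis
      using Sup_upper l2norm_nonneg order_trans by (metis ereal_less_eq(5))
  qed
  ultimately obtain m where m: "Sup S = ereal m" "0 \<le> m"
    by (cases "Sup S") auto
  show ?thesis
  proof (rule that)
    show "0 \<le> m" "inv_norm A I = ereal m"
      using m inv_norm by simp_all
    show "l2norm (the_inv_into (l2 I) (mapply A I) y) \<le> m" if "y \<in> l2 I" "l2norm y = 1" for y
      using Sup_upper[of "ereal (l2norm (R y))" S] that m(1) by (auto simp: S_def R_def)
  qed
qed

lemma invertible_on_lower_bound:
  assumes inv: "invertible_on A I" and "p \<in> I"
  obtains m where "0 \<le> m" "inv_norm A I = ereal m"
    "\<And>x. x \<in> l2 I \<Longrightarrow> l2norm x \<le> m * l2norm (mapply A I x)"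
proof -
  obtain m where m: "0 \<le> m" "inv_norm A I = ereal m"
    and unit_bound: "\<And>y. y \<in> l2 I \<Longrightarrow> l2norm y = 1
      \<Longrightarrow> l2norm (the_inv_into (l2 I) (mapply A I) y) \<le> m"
    using inv_norm_eq_ereal[OF assms] by blast
  have bij: "bij_betw (mapply A I) (l2 I) (l2 I)" and inj: "inj_on (mapply A I) (l2 I)"
    using inv by (auto simp: invertible_on_def bij_betw_def)
  have "l2norm x \<le> m * l2norm (mapply A I x)" if x: "x \<in> l2 I" for x
  proof (cases "l2norm (mapply A I x) = 0")
    case True
    have "mapply A I x = mapply A I (\<lambda>k. 0)"
      using l2norm_eq_0[OF bij_betw_apply[OF bij x] True] by (simp add: mapply_zero)
    then have "x = (\<lambda>k. 0)"
      using inj_onD[OF inj] x l2_finite_support[of "{}" I] by auto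
    then show ?thesis
      using True by (simp add: l2norm_zero)
  next
    case False
    define s where "s = l2norm (mapply A I x)"
    have "0 < s"
      using False l2norm_nonneg s_def by (simp add: order_less_le)
    define u where "u = (\<lambda>k. complex_of_real (1 / s) * x k)"
    have u: "u \<in> l2 I" "l2norm u = l2norm x / s"
      using l2_scale[OF x, of "complex_of_real (1 / s)"] \<open>0 < s\<close> by (simp_all add: u_def norm_divide)
    have Au: "mapply A I u = (\<lambda>i. complex_of_real (1 / s) * mapply A I x i)"
      unfolding u_def by (rule mapply_scale)
    have "l2norm (mapply A I u) = 1" "mapply A I u \<in> l2 I"
      using l2_scale[OF bij_betw_apply[OF bij x], of "complex_of_real (1 / s)"] \<open>0 < s\<close>
      by (simp_all add: Au s_def norm_divide)
    moreover have "the_inv_into (l2 I) (mapply A I) (mapply A I u) = u"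
      by (rule the_inv_into_f_f[OF inj u(1)])
    ultimately have "l2norm x / s \<le> m"
      using unit_bound u(2) by metis
    then show ?thesis
      using \<open>0 < s\<close> by (simp add: s_def divide_le_eq mult.commute)
  qed
  then show ?thesis
    using that m by simp
qed

lemma invertible_onI_lower_bound:
  assumes band: "band_width w A" and bounded: "bounded_op A I"
    and lower: "\<And>x. x \<in> l2 I \<Longrightarrow> l2norm x \<le> m * l2norm (mapply A I x)"
    and surj: "\<And>y. y \<in> l2 I \<Longrightarrow> \<exists>x\<in>l2 I. mapply A I x = y"
  shows "invertible_on A I" "inv_norm A I \<le> ereal m"
proof -
  have into: "mapply A I x \<in> l2 I" if "x \<in> l2 I" for x
    using bounded that unfolding bounded_op_def by blast
  have inj: "inj_on (mapply A I) (l2 I)"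
  proof (rule inj_onI)
    fix x y assume x: "x \<in> l2 I" and y: "y \<in> l2 I" and eq: "mapply A I x = mapply A I y"
    have "l2norm (\<lambda>k. x k - y k) \<le> m * l2norm (mapply A I (\<lambda>k. x k - y k))"
      using lower[OF l2_diff[OF x y]] .
    also have "\<dots> = 0"
      using eq by (simp add: mapply_diff[OF band] l2norm_zero)
    finally have "(\<lambda>k. x k - y k) = (\<lambda>k. 0)"
      using l2norm_eq_0[OF l2_diff[OF x y]] l2norm_nonneg by (simp add: order_antisym)
    then show "x = y"
      by (simp add: fun_eq_iff)
  qed
  have bij: "bij_betw (mapply A I) (l2 I) (l2 I)"
    using inj into surj unfolding bij_betw_def by blast
  have inverse_bound: "l2norm (the_inv_into (l2 I) (mapply A I) y) \<le> m * l2norm y" if y: "y \<in> l2 I" for y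
  proof -
    obtain x where "x \<in> l2 I" "mapply A I x = y"
      using surj[OF y] by blast
    then show ?thesis
      using lower the_inv_into_f_f[OF inj] by metis
  qed
  show inv: "invertible_on A I"
    unfolding invertible_on_def using bounded bij inverse_bound by blast
  show "inv_norm A I \<le> ereal m"
    unfolding inv_norm_def using inv by (auto intro!: Sup_least dest: inverse_bound)
qed

lemma nu_le:
  assumes "x \<in> l2 I" "l2norm x = 1" "\<forall>i j. x i \<noteq> 0 \<longrightarrow> x j \<noteq> 0 \<longrightarrow> \<bar>i - j\<bar> < int N"
  shows "nu N A I \<le> l2norm (mapply A I x)"
  unfolding nu_def using assms
  by (intro cInf_lower) (blast, auto intro!: bdd_belowI[of _ 0] simp: l2norm_nonneg)

lemma le_nu:
  assumes "p \<in> I" "1 \<le> N"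
    and "\<And>x. x \<in> l2 I \<Longrightarrow> l2norm x = 1 \<Longrightarrow> \<forall>i j. x i \<noteq> 0 \<longrightarrow> x j \<noteq> 0 \<longrightarrow> \<bar>i - j\<bar> < int N
      \<Longrightarrow> m \<le> l2norm (mapply A I x)"
  shows "m \<le> nu N A I"
proof -
  define e where "e = (\<lambda>i. if i = p then 1 else 0 :: complex)"
  have "e \<in> l2 I \<and> l2norm e = 1 \<and> (\<forall>i j. e i \<noteq> 0 \<longrightarrow> e j \<noteq> 0 \<longrightarrow> \<bar>i - j\<bar> < int N)"
    using l2_unit_vector[OF assms(1)] assms(2) by (simp add: e_def)
  then show ?thesis
    unfolding nu_def using assms(3) by (intro cInf_greatest) blast+
qed

lemma nu_win_le:
  assumes "(\<Sum>k\<in>{l..r}. (cmod (x k))\<^sup>2) = 1"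
  shows "nu_win w A l r \<le> sqrt (\<Sum>i\<in>{1..r + int w}. (cmod (\<Sum>k\<in>{l..r}. A i k * x k))\<^sup>2)"
  unfolding nu_win_def using assms
  by (intro cInf_lower) (blast, auto intro!: bdd_belowI[of _ 0] sum_nonneg)

lemma le_nu_win:
  assumes "l \<le> r"
    and "\<And>x. (\<Sum>k\<in>{l..r}. (cmod (x k))\<^sup>2) = 1
      \<Longrightarrow> m \<le> sqrt (\<Sum>i\<in>{1..r + int w}. (cmod (\<Sum>k\<in>{l..r}. A i k * x k))\<^sup>2)"
  shows "m \<le> nu_win w A l r"
  unfolding nu_win_def
proof (rule cInf_greatest)
  define e where "e = (\<lambda>k. if k = l then 1 else 0 :: complex)"
  have "(\<Sum>k\<in>{l..r}. (cmod (e k))\<^sup>2) = (\<Sum>k\<in>{l..r}. if k = l then 1 else 0)"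
    by (intro sum.cong) (auto simp: e_def)
  also have "\<dots> = 1"
    using assms(1) by simp
  finally show "{sqrt (\<Sum>i\<in>{1..r + int w}. (cmod (\<Sum>k\<in>{l..r}. A i k * x k))\<^sup>2) | x.
      (\<Sum>k\<in>{l..r}. (cmod (x k))\<^sup>2) = 1} \<noteq> {}"
    by blast
qed (use assms(2) in blast)

lemma support_in_window:
  assumes "x \<noteq> (\<lambda>i. 0)" and diam: "\<forall>i j. x i \<noteq> 0 \<longrightarrow> x j \<noteq> 0 \<longrightarrow> \<bar>i - j\<bar> < int N"
  obtains l where "x l \<noteq> 0" "\<And>k. k \<notin> {l..l + int N - 1} \<Longrightarrow> x k = 0"
proof -
  obtain s where s: "x s \<noteq> 0"
    using assms(1) by auto
  define supp where "supp = {k. x k \<noteq> 0}"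
  have "supp \<subseteq> {s - int N..s + int N}"
  proof
    fix k assume "k \<in> supp"
    then have "\<bar>k - s\<bar> < int N"
      using diam s by (simp add: supp_def)
    then show "k \<in> {s - int N..s + int N}"
      by (simp add: abs_less_iff)
  qed
  then have "finite supp"
    by (rule finite_subset) simp
  define l where "l = Min supp"
  have "x l \<noteq> 0"
    using Min_in[OF \<open>finite supp\<close>] s by (auto simp: l_def supp_def)
  moreover have "x k = 0" if "k \<notin> {l..l + int N - 1}" for k
  proof (rule ccontr)
    assume "x k \<noteq> 0"
    then have "l \<le> k" "\<bar>k - l\<bar> < int N"
      using Min_le[OF \<open>finite supp\<close>] diam \<open>x l \<noteq> 0\<close> by (auto simp: l_def supp_def)
    with that show False
      by simp
  qed
  ultimately show ?thesis
    by (rule that)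
qed

section \<open>Compressions of pattern-equivariant band matrices\<close>

(* T abstracts H(b) - \<lambda>; the assumption recurrent is what W(b) = W(b|N) provides. *)
locale pattern_band_matrix =
  fixes T :: imat and b :: iseq and w :: nat
  assumes band: "band_width w T"
    and pattern: "\<And>i j c. b (j + c) = b j \<Longrightarrow> T (i + c) (j + c) = T i j"
    and recurrent: "\<And>a a'. \<exists>c. int w < a + c \<and> (\<forall>j\<in>{a..a'}. b (j + c) = b j)"
begin

lemma mapply_Nplus_translate_at:
  assumes "1 \<le> i + c"
    and window: "\<And>k. \<bar>k - i\<bar> \<le> int w \<Longrightarrow> x (k + c) \<noteq> 0 \<Longrightarrow> 1 \<le> k + c \<and> b (k + c) = b k"
  shows "mapply T Nplus x (i + c) = mapply T UNIV (\<lambda>k. x (k + c)) i"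
proof -
  have "mapply T Nplus x (i + c) = (\<Sum>k\<in>{i + c - int w..i + c + int w} \<inter> Nplus. T (i + c) k * x k)"
    using mapply_band[OF band] \<open>1 \<le> i + c\<close> by (simp add: Nplus_def)
  also have "\<dots> = (\<Sum>k\<in>{i + c - int w..i + c + int w}. T (i + c) k * x k)"
  proof (rule sum.mono_neutral_left)
    show "\<forall>k\<in>{i + c - int w..i + c + int w} - {i + c - int w..i + c + int w} \<inter> Nplus.
        T (i + c) k * x k = 0"
      using window[of "_ - c"] by (fastforce simp: Nplus_def)
  qed auto
  also have "\<dots> = (\<Sum>k\<in>{i - int w..i + int w}. T (i + c) (k + c) * x (k + c))"
    by (rule sum.reindex_bij_witness[where i="\<lambda>k. k + c" and j="\<lambda>k. k - c"]) auto
  also have "\<dots> = (\<Sum>k\<in>{i - int w..i + int w}. T i k * x (k + c))"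
  proof (rule sum.cong[OF refl])
    fix k
    assume "k \<in> {i - int w..i + int w}"
    then show "T (i + c) (k + c) * x (k + c) = T i k * x (k + c)"
      using window[of k] pattern[of k c i] by (cases "x (k + c) = 0") auto
  qed
  also have "\<dots> = mapply T UNIV (\<lambda>k. x (k + c)) i"
    by (simp add: mapply_band_UNIV[OF band])
  finally show ?thesis .
qed

lemma mapply_Nplus_translate:
  assumes x: "\<And>k. k \<notin> {a..a'} \<Longrightarrow> x k = 0"
    and "int w < a + c" and "\<forall>j\<in>{a..a'}. b (j + c) = b j"
  shows "mapply T Nplus (\<lambda>i. x (i - c)) = (\<lambda>i. mapply T UNIV x (i - c))"
proof
  fix i
  show "mapply T Nplus (\<lambda>i. x (i - c)) i = mapply T UNIV x (i - c)"
  proof (cases "1 \<le> i")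
    case True
    have "mapply T Nplus (\<lambda>i. x (i - c)) ((i - c) + c) = mapply T UNIV (\<lambda>k. x (k + c - c)) (i - c)"
      by (rule mapply_Nplus_translate_at) (use True x assms(2,3) in force)+
    then show ?thesis
      by simp
  next
    case False
    have "T (i - c) k = 0" if "k \<in> {a..a'}" for k
      using band False that \<open>int w < a + c\<close> by (auto simp: band_width_def)
    then have "mapply T UNIV x (i - c) = 0"
      using mapply_finite_support[of "{a..a'}" UNIV x T "i - c"] x by simp
    then show ?thesis
      using False by (simp add: mapply_def Nplus_def)
  qed
qed

lemma translate_into_Nplus:
  assumes x: "\<And>k. k \<notin> {a..a'} \<Longrightarrow> x k = 0"
  obtains c where "(\<lambda>i. x (i - c)) \<in> l2 Nplus" "l2norm (\<lambda>i. x (i - c)) = l2norm x"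
    "l2norm (mapply T Nplus (\<lambda>i. x (i - c))) = l2norm (mapply T UNIV x)"
proof -
  obtain c where c: "int w < a + c" "\<forall>j\<in>{a..a'}. b (j + c) = b j"
    using recurrent by blast
  have "(\<lambda>i. x (i - c)) \<in> l2 Nplus"
    by (rule l2_finite_support[of "{a + c..a' + c}"]) (use x c(1) in \<open>auto simp: Nplus_def\<close>)
  moreover have "l2norm (\<lambda>i. x (i - c)) = l2norm x"
    using l2norm_translate[of x "- c"] by simp
  moreover have "l2norm (mapply T Nplus (\<lambda>i. x (i - c))) = l2norm (mapply T UNIV x)"
    using mapply_Nplus_translate[where x=x and a=a and a'=a' and c=c, OF x c]
      l2norm_translate[of "mapply T UNIV x" "- c"] by simp
  ultimately show ?thesis
    by (rule that)
qed

lemma nu_Nplus_le_nu_UNIV: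
  assumes "1 \<le> N"
  shows "nu N T Nplus \<le> nu N T UNIV"
proof (rule le_nu[of 0 UNIV N])
  fix x
  assume x: "x \<in> l2 UNIV" "l2norm x = 1"
    and diam: "\<forall>i j. x i \<noteq> 0 \<longrightarrow> x j \<noteq> 0 \<longrightarrow> \<bar>i - j\<bar> < int N"
  have "x \<noteq> (\<lambda>i. 0)"
    using x(2) by (auto simp: l2norm_zero)
  then obtain l where "\<And>k. k \<notin> {l..l + int N - 1} \<Longrightarrow> x k = 0"
    using support_in_window[OF _ diam] by blast
  then obtain c where c: "(\<lambda>i. x (i - c)) \<in> l2 Nplus" "l2norm (\<lambda>i. x (i - c)) = l2norm x"
    "l2norm (mapply T Nplus (\<lambda>i. x (i - c))) = l2norm (mapply T UNIV x)"
    by (rule translate_into_Nplus)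
  have "\<forall>i j. x (i - c) \<noteq> 0 \<longrightarrow> x (j - c) \<noteq> 0 \<longrightarrow> \<bar>i - j\<bar> < int N"
  proof (intro allI impI)
    fix i j
    assume "x (i - c) \<noteq> 0" "x (j - c) \<noteq> 0"
    then have "\<bar>(i - c) - (j - c)\<bar> < int N"
      using diam by blast
    then show "\<bar>i - j\<bar> < int N"
      by simp
  qed
  then show "nu N T Nplus \<le> l2norm (mapply T UNIV x)"
    using nu_le[of "\<lambda>i. x (i - c)" Nplus N T] c x(2) by simp
qed (use assms in auto)

lemma nu_Nplus_le_nu_win:
  assumes "1 \<le> l" "1 \<le> N"
  shows "nu N T Nplus \<le> nu_win w T l (l + int N - 1)"
proof (rule le_nu_win)
  define r where "r = l + int N - 1"
  fix x
  assume unit: "(\<Sum>k\<in>{l..l + int N - 1}. (cmod (x k))\<^sup>2) = 1"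
  define x' where "x' k = (if k \<in> {l..r} then x k else 0)" for k
  have x'_zero: "\<And>k. k \<notin> {l..r} \<Longrightarrow> x' k = 0"
    by (auto simp: x'_def)
  have "x' \<in> l2 Nplus"
    using x'_zero \<open>1 \<le> l\<close> by (intro l2_finite_support[of "{l..r}"]) (auto simp: Nplus_def)
  moreover have "l2norm x' = 1"
    using l2norm_finite_support(2)[of "{l..r}" x', OF _ x'_zero] unit by (simp add: x'_def r_def)
  moreover have "\<forall>i j. x' i \<noteq> 0 \<longrightarrow> x' j \<noteq> 0 \<longrightarrow> \<bar>i - j\<bar> < int N"
  proof (intro allI impI)
    fix i j
    assume "x' i \<noteq> 0" "x' j \<noteq> 0"
    then have "i \<in> {l..r}" "j \<in> {l..r}"
      using x'_zero by blast+
    then show "\<bar>i - j\<bar> < int N"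
      by (auto simp: r_def)
  qed
  ultimately have "nu N T Nplus \<le> l2norm (mapply T Nplus x')"
    by (rule nu_le)
  also have "\<dots> = sqrt (\<Sum>i\<in>{1..r + int w}. (cmod (\<Sum>k\<in>{l..r}. T i k * x k))\<^sup>2)"
    using l2norm_mapply_window[where r=r and x=x', OF band \<open>1 \<le> l\<close> x'_zero]
    by (simp add: x'_def)
  finally show "nu N T Nplus
      \<le> sqrt (\<Sum>i\<in>{1..l + int N - 1 + int w}. (cmod (\<Sum>k\<in>{l..l + int N - 1}. T i k * x k))\<^sup>2)"
    by (simp add: r_def)
qed (use assms in auto)

lemma le_nu_Nplus:
  assumes "1 \<le> N"
    and win: "\<And>l. 1 \<le> l \<Longrightarrow> l \<le> int w \<Longrightarrow> m \<le> nu_win w T l (l + int N - 1)"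
    and UNIV: "m \<le> nu N T UNIV"
  shows "m \<le> nu N T Nplus"
proof (rule le_nu[of 1 Nplus N])
  fix x
  assume x: "x \<in> l2 Nplus" "l2norm x = 1"
    and diam: "\<forall>i j. x i \<noteq> 0 \<longrightarrow> x j \<noteq> 0 \<longrightarrow> \<bar>i - j\<bar> < int N"
  have "x \<noteq> (\<lambda>i. 0)"
    using x(2) by (auto simp: l2norm_zero)
  then obtain l where "x l \<noteq> 0" and x_zero: "\<And>k. k \<notin> {l..l + int N - 1} \<Longrightarrow> x k = 0"
    using support_in_window[OF _ diam] by blast
  then have "1 \<le> l"
    using x(1) by (auto simp: l2_def Nplus_def)
  show "m \<le> l2norm (mapply T Nplus x)"
  proof (cases "l \<le> int w")
    case True
    have "(\<Sum>k\<in>{l..l + int N - 1}. (cmod (x k))\<^sup>2) = 1"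
      using l2norm_finite_support(2)[of "{l..l + int N - 1}" x, OF _ x_zero] x(2) by simp
    then have "nu_win w T l (l + int N - 1) \<le> l2norm (mapply T Nplus x)"
      using nu_win_le l2norm_mapply_window[where r="l + int N - 1" and x=x, OF band \<open>1 \<le> l\<close> x_zero]
      by simp
    then show ?thesis
      using win[OF \<open>1 \<le> l\<close> True] by simp
  next
    case False
    have "mapply T Nplus x = mapply T UNIV x"
      using mapply_Nplus_translate[where c=0 and x=x and a=l and a'="l + int N - 1", OF x_zero] False
      by simp
    moreover have "x \<in> l2 UNIV"
      using x(1) by (simp add: l2_def)
    ultimately have "nu N T UNIV \<le> l2norm (mapply T Nplus x)"
      using nu_le[OF _ x(2) diam] by simp
    then show ?thesis
      using UNIV by simp
  qed
qed (use assms in \<open>auto simp: Nplus_def\<close>)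

theorem nu_Nplus_eq:
  assumes "1 \<le> N"
  shows "nu N T Nplus =
    Min ({nu_win w T (int j) (int j + int N - 1) | j. j \<in> {1..w}} \<union> {nu N T UNIV})"
    (is "_ = Min ?M")
proof (rule antisym)
  have "finite ?M"
    by simp
  then show "nu N T Nplus \<le> Min ?M"
    using nu_Nplus_le_nu_win nu_Nplus_le_nu_UNIV assms by (auto intro!: Min.boundedI)
  show "Min ?M \<le> nu N T Nplus"
  proof (rule le_nu_Nplus[OF assms])
    fix l :: int
    assume "1 \<le> l" "l \<le> int w"
    then have "nu_win w T l (l + int N - 1) \<in> ?M"
      by (auto intro!: exI[of _ "nat l"])
    then show "Min ?M \<le> nu_win w T l (l + int N - 1)"
      by (rule Min_le[OF \<open>finite ?M\<close>])
  qed (use \<open>finite ?M\<close> in simp)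
qed

lemma lower_bound_finite_support:
  assumes lower: "\<And>v. v \<in> l2 Nplus \<Longrightarrow> l2norm v \<le> m * l2norm (mapply T Nplus v)"
    and x: "\<And>k. k \<notin> {a..a'} \<Longrightarrow> x k = 0"
  shows "l2norm x \<le> m * l2norm (mapply T UNIV x)"
proof -
  obtain c where "(\<lambda>i. x (i - c)) \<in> l2 Nplus" "l2norm (\<lambda>i. x (i - c)) = l2norm x"
    "l2norm (mapply T Nplus (\<lambda>i. x (i - c))) = l2norm (mapply T UNIV x)"
    using translate_into_Nplus[where x=x, OF x] by blast
  then show ?thesis
    using lower by metis
qed

(* Split x into a finitely supported part and a tail of norm \<epsilon>; since T is bounded, the tail
  changes both sides of the finitely supported bound by O(\<epsilon>). *)
lemma lower_bound_UNIV:
  assumes entries: "\<And>i j. cmod (T i j) \<le> K" and "0 \<le> m"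
    and lower: "\<And>v. v \<in> l2 Nplus \<Longrightarrow> l2norm v \<le> m * l2norm (mapply T Nplus v)"
    and x: "x \<in> l2 UNIV"
  shows "l2norm x \<le> m * l2norm (mapply T UNIV x)"
proof (rule field_le_epsilon)
  fix e :: real
  assume "0 < e"
  define C where "C = (2 * real w + 1) * K"
  have "0 \<le> C"
    using entries[of 0 0] by (simp add: C_def order_trans[OF norm_ge_zero])
  define \<epsilon> where "\<epsilon> = e / (m * C + 1)"
  have "0 < m * C + 1"
    using mult_nonneg_nonneg[OF \<open>0 \<le> m\<close> \<open>0 \<le> C\<close>] by linarith
  then have "0 < \<epsilon>"
    using \<open>0 < e\<close> by (simp add: \<epsilon>_def)
  then obtain n xt t where xt_zero: "\<And>k. k \<notin> {- n..n} \<Longrightarrow> xt k = 0"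
    and "xt \<in> l2 UNIV" "t \<in> l2 UNIV" "l2norm t \<le> \<epsilon>" and split: "\<And>k. x k = xt k + t k"
    using l2_split_finite_support[OF x] by blast
  have Tt: "l2norm (mapply T UNIV t) \<le> C * \<epsilon>"
    using band_matrix_l2_bounded(2)[OF band entries \<open>t \<in> l2 UNIV\<close>] \<open>l2norm t \<le> \<epsilon>\<close> \<open>0 \<le> C\<close>
    unfolding C_def by (meson mult_left_mono order_trans)
  have "xt = (\<lambda>k. x k - t k)"
    using split by (simp add: fun_eq_iff)
  then have "mapply T UNIV xt = (\<lambda>i. mapply T UNIV x i - mapply T UNIV t i)"
    by (simp add: mapply_diff[OF band])
  then have Txt: "l2norm (mapply T UNIV xt) \<le> l2norm (mapply T UNIV x) + l2norm (mapply T UNIV t)"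
    using l2_summable[OF band_matrix_l2_bounded(1)[OF band entries x]]
      l2_summable[OF band_matrix_l2_bounded(1)[OF band entries \<open>t \<in> l2 UNIV\<close>]]
    by (intro l2norm_triangle_pointwise(2)) (simp_all add: norm_triangle_ineq4)
  have "l2norm x \<le> l2norm xt + l2norm t"
    using l2_summable[OF \<open>xt \<in> l2 UNIV\<close>] l2_summable[OF \<open>t \<in> l2 UNIV\<close>]
    by (intro l2norm_triangle_pointwise(2)) (simp_all add: split norm_triangle_ineq)
  also have "\<dots> \<le> m * l2norm (mapply T UNIV xt) + \<epsilon>"
    using lower_bound_finite_support[where x=xt and a="- n" and a'=n, OF lower xt_zero]
      \<open>l2norm t \<le> \<epsilon>\<close> by simp
  also have "\<dots> \<le> m * (l2norm (mapply T UNIV x) + C * \<epsilon>) + \<epsilon>"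
    using mult_left_mono[OF order_trans[OF Txt add_left_mono[OF Tt]] \<open>0 \<le> m\<close>] by linarith
  also have "\<dots> = m * l2norm (mapply T UNIV x) + (m * C + 1) * \<epsilon>"
    by (simp add: algebra_simps)
  also have "\<dots> = m * l2norm (mapply T UNIV x) + e"
    using \<open>0 < m * C + 1\<close> by (simp add: \<epsilon>_def)
  finally show "l2norm x \<le> m * l2norm (mapply T UNIV x) + e" .
qed

(* Solve T^+ v = y|[-n,n] translated by c, where b repeats its values on [-n, n] at distance c;
  translated back, v solves T X = y wherever the band of row i stays inside [-n, n]. *)
lemma approximate_preimage:
  assumes "0 \<le> m"
    and lower: "\<And>v. v \<in> l2 Nplus \<Longrightarrow> l2norm v \<le> m * l2norm (mapply T Nplus v)"
    and surj: "\<And>y. y \<in> l2 Nplus \<Longrightarrow> \<exists>v\<in>l2 Nplus. mapply T Nplus v = y"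
    and y: "y \<in> l2 UNIV"
  obtains X where "(\<lambda>i. (cmod (X i))\<^sup>2) summable_on UNIV" "l2norm X \<le> m * l2norm y"
    "\<And>i. \<bar>i\<bar> + int w \<le> int n \<Longrightarrow> mapply T UNIV X i = y i"
proof -
  define yt where "yt i = (if \<bar>i\<bar> \<le> int n then y i else 0)" for i
  obtain c where c: "int w < - int n + c" "\<forall>j\<in>{- int n..int n}. b (j + c) = b j"
    using recurrent by blast
  have "(\<lambda>i. yt (i - c)) \<in> l2 Nplus"
    using c(1) by (intro l2_finite_support[of "{c - int n..c + int n}"]) (auto simp: yt_def Nplus_def)
  then obtain v where v: "v \<in> l2 Nplus" "mapply T Nplus v = (\<lambda>i. yt (i - c))"
    using surj by blast
  define X where "X i = v (i + c)" for i
  have "(\<lambda>i. (cmod (X i))\<^sup>2) summable_on UNIV"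
    unfolding X_def summable_translate using v(1) by (rule l2_summable)
  moreover have "l2norm X \<le> m * l2norm y"
  proof -
    have "l2norm X = l2norm v"
      unfolding X_def by (rule l2norm_translate)
    also have "\<dots> \<le> m * l2norm (\<lambda>i. yt (i - c))"
      using lower[OF v(1)] v(2) by simp
    also have "\<dots> \<le> m * l2norm y"
      using l2norm_translate[of yt "- c"] l2norm_mono_pointwise[OF l2_summable[OF y], of yt] \<open>0 \<le> m\<close>
      by (simp add: yt_def mult_left_mono)
    finally show ?thesis .
  qed
  moreover have "mapply T UNIV X i = y i" if "\<bar>i\<bar> + int w \<le> int n" for i
  proof -
    have "k \<in> {- int n..int n}" if "\<bar>k - i\<bar> \<le> int w" for k
      using that \<open>\<bar>i\<bar> + int w \<le> int n\<close> by auto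
    then have "mapply T UNIV X i = mapply T Nplus v (i + c)"
      unfolding X_def using that c by (intro mapply_Nplus_translate_at[symmetric]) auto
    also have "\<dots> = y i"
      using that by (simp add: v(2) yt_def)
    finally show ?thesis .
  qed
  ultimately show ?thesis
    using that by blast
qed

lemma surj_UNIV:
  assumes "0 \<le> m"
    and lower: "\<And>v. v \<in> l2 Nplus \<Longrightarrow> l2norm v \<le> m * l2norm (mapply T Nplus v)"
    and surj: "\<And>y. y \<in> l2 Nplus \<Longrightarrow> \<exists>v\<in>l2 Nplus. mapply T Nplus v = y"
    and y: "y \<in> l2 UNIV"
  shows "\<exists>x\<in>l2 UNIV. mapply T UNIV x = y"
proof -
  have "\<forall>n. \<exists>X. (\<lambda>i. (cmod (X i))\<^sup>2) summable_on UNIV \<and> l2norm X \<le> m * l2norm y \<and>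
      (\<forall>i. \<bar>i\<bar> + int w \<le> int n \<longrightarrow> mapply T UNIV X i = y i)"
    using approximate_preimage[OF assms] by metis
  then obtain X where summable: "\<And>n. (\<lambda>i. (cmod (X n i))\<^sup>2) summable_on UNIV"
    and bound: "\<And>n. l2norm (X n) \<le> m * l2norm y"
    and solves: "\<And>n i. \<bar>i\<bar> + int w \<le> int n \<Longrightarrow> mapply T UNIV (X n) i = y i"
    by metis
  obtain \<phi> x where "strict_mono \<phi>" and lim: "\<And>j. (\<lambda>k. X (\<phi> k) j) \<longlonglongrightarrow> x j"
    using pointwise_convergent_subseq[of X "m * l2norm y"]
      norm_le_l2norm[OF summable] bound order_trans by metis
  have "x \<in> l2 UNIV"
    using l2norm_le_pointwise_limit(1)[OF lim summable bound] by (simp add: l2_def)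
  moreover have "mapply T UNIV x i = y i" for i
  proof (rule LIMSEQ_unique)
    show "(\<lambda>k. mapply T UNIV (X (\<phi> k)) i) \<longlonglongrightarrow> mapply T UNIV x i"
      unfolding mapply_band_UNIV[OF band] by (intro tendsto_sum tendsto_mult tendsto_const lim)
    have "\<forall>\<^sub>F k in sequentially. mapply T UNIV (X (\<phi> k)) i = y i"
    proof (rule eventually_sequentiallyI)
      fix k
      assume "nat (\<bar>i\<bar> + int w) \<le> k"
      then have "\<bar>i\<bar> + int w \<le> int (\<phi> k)"
        using seq_suble[OF \<open>strict_mono \<phi>\<close>, of k] by linarith
      then show "mapply T UNIV (X (\<phi> k)) i = y i"
        by (rule solves)
    qed
    then show "(\<lambda>k. mapply T UNIV (X (\<phi> k)) i) \<longlonglongrightarrow> y i"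
      by (rule tendsto_eventually)
  qed
  ultimately show ?thesis
    by auto
qed

theorem invertible_on_UNIV_if_invertible_on_Nplus:
  assumes entries: "\<And>i j. cmod (T i j) \<le> K" and inv: "invertible_on T Nplus"
  shows "invertible_on T UNIV" "inv_norm T UNIV \<le> inv_norm T Nplus"
proof -
  obtain m where "0 \<le> m" and m: "inv_norm T Nplus = ereal m"
    and lower: "\<And>v. v \<in> l2 Nplus \<Longrightarrow> l2norm v \<le> m * l2norm (mapply T Nplus v)"
    using invertible_on_lower_bound[OF inv, of 1] by (auto simp: Nplus_def)
  have surj: "\<And>y. y \<in> l2 Nplus \<Longrightarrow> \<exists>v\<in>l2 Nplus. mapply T Nplus v = y"
    using inv unfolding invertible_on_def by (metis bij_betw_imp_surj_on imageE)
  have "bounded_op T UNIV"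
    unfolding bounded_op_def using band_matrix_l2_bounded[OF band entries] by blast
  from invertible_onI_lower_bound[OF band this lower_bound_UNIV[OF entries \<open>0 \<le> m\<close> lower]
      surj_UNIV[OF \<open>0 \<le> m\<close> lower surj]]
  show "invertible_on T UNIV" "inv_norm T UNIV \<le> inv_norm T Nplus"
    using m by simp_all
qed

end

section \<open>The operators H(b)\<close>

lemma recurrent_if_subwords_eq:
  assumes words: "subwords UNIV b = subwords Nplus b"
  shows "\<exists>c. int d < a + c \<and> (\<forall>j\<in>{a..a'}. b (j + c) = b j)"
proof (cases "a \<le> a'")
  case False
  then show ?thesis
    by (intro exI[of _ "int d + 1 - a"]) auto
next
  case True
  (* Looking up the word on [a - d, a'] makes its copy in b|N start at p >= 1, so a lands beyond d. *)
  define s where "s = a - int d"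
  define n where "n = nat (a' - s + 1)"
  have "map (\<lambda>k. b (s + int k)) [0..<n] \<in> subwords Nplus b"
    using words unfolding subwords_def by blast
  then obtain p n' where word: "map (\<lambda>k. b (s + int k)) [0..<n] = map (\<lambda>k. b (p + int k)) [0..<n']"
    and in_Nplus: "\<forall>k<n'. p + int k \<in> Nplus"
    unfolding subwords_def by blast
  have "n' = n"
    using arg_cong[OF word, of length] by simp
  then have "0 < n'"
    using True by (simp add: n_def s_def)
  then have "1 \<le> p"
    using in_Nplus by (auto simp: Nplus_def)
  moreover have "b (j + (p - s)) = b j" if "j \<in> {a..a'}" for j
  proof -
    define k where "k = nat (j - s)"
    have "k < n" "s + int k = j"
      using that by (auto simp: k_def n_def s_def)
    have "j + (p - s) = p + int k"
      using \<open>s + int k = j\<close> by linarith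
    then have "b (j + (p - s)) = b (p + int k)"
      by (rule arg_cong)
    also have "\<dots> = b (s + int k)"
      using arg_cong[OF word, of "\<lambda>l. l ! k"] \<open>k < n\<close> \<open>n' = n\<close> by simp
    finally show ?thesis
      using \<open>s + int k = j\<close> by simp
  qed
  ultimately show ?thesis
    by (intro exI[of _ "p - s"]) (auto simp: s_def)
qed

lemma infsum_eq_single:
  fixes f :: "'a \<Rightarrow> 'b::{comm_monoid_add, t2_space}"
  assumes "\<And>k. k \<noteq> a \<Longrightarrow> f k = 0"
  shows "(\<Sum>\<^sub>\<infinity>k. f k) = f a"
  using infsum_cong_neutral[of "{a}" UNIV f f] assms by simp

lemma toeplitz_if_commutes_with_shift:
  assumes "mmult L shift = mmult shift L"
  shows "L (i + c) (j + c) = L i j"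
proof -
  have step: "L (i + 1) (j + 1) = L i j" for i j
  proof -
    have "mmult L shift (i + 1) j = L (i + 1) (j + 1)"
      unfolding mmult_def shift_def by (subst infsum_eq_single[where a="j + 1"]) auto
    moreover have "mmult shift L (i + 1) j = L i j"
      unfolding mmult_def shift_def by (subst infsum_eq_single[where a=i]) auto
    ultimately show ?thesis
      using assms by simp
  qed
  have "\<forall>i j. L (i + c) (j + c) = L i j"
  proof (induction c rule: int_induct[where k=0])
    case (step1 c)
    then show ?case
      using step[of "i + c" "j + c" for i j] by (simp add: add.assoc)
  next
    case (step2 c)
    then show ?case
      using step[of "i + (c - 1)" "j + (c - 1)" for i j] by (simp add: algebra_simps)
  qed simp
  then show ?thesis
    by blast
qed

lemma mshift_operator_entry:
  "mshift (madd L (mmult (shift_pow \<gamma>) (mult_op u))) z i j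
    = L i j + (if j = i - \<gamma> then u j else 0) - (if i = j then z else 0)"
proof -
  have "mmult (shift_pow \<gamma>) (mult_op u) i j = (if j = i - \<gamma> then u j else 0)"
    unfolding mmult_def shift_pow_def mult_op_def by (subst infsum_eq_single[where a=j]) auto
  then show ?thesis
    by (simp add: mshift_def madd_def)
qed

lemma pattern_band_matrix_mshift_operator:
  assumes comm: "mmult L shift = mmult shift L"
    and band: "band_width w (madd L (mmult (shift_pow \<gamma>) (mult_op b)))"
    and words: "subwords UNIV b = subwords Nplus b"
  shows "pattern_band_matrix (mshift (madd L (mmult (shift_pow \<gamma>) (mult_op b))) z) b w"
proof
  show "band_width w (mshift (madd L (mmult (shift_pow \<gamma>) (mult_op b))) z)"
    using band by (auto simp: band_width_def mshift_def)
  show "mshift (madd L (mmult (shift_pow \<gamma>) (mult_op b))) z (i + c) (j + c)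
      = mshift (madd L (mmult (shift_pow \<gamma>) (mult_op b))) z i j" if "b (j + c) = b j" for i j c
    using that toeplitz_if_commutes_with_shift[OF comm] by (auto simp: mshift_operator_entry)
  show "\<exists>c. int w < a + c \<and> (\<forall>j\<in>{a..a'}. b (j + c) = b j)" for a a'
    by (rule recurrent_if_subwords_eq[OF words])
qed

lemma mshift_operator_entries_bounded:
  assumes comm: "mmult L shift = mmult shift L"
    and band: "band_width w (madd L (mmult (shift_pow \<gamma>) (mult_op b)))"
    and "bounded (range b)"
  obtains K where "\<And>i j. cmod (mshift (madd L (mmult (shift_pow \<gamma>) (mult_op b))) z i j) \<le> K"
proof -
  obtain B where "0 < B" and B: "\<And>j. cmod (b j) \<le> B"
    using \<open>bounded (range b)\<close> unfolding bounded_pos by blast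
  define K where "K = (\<Sum>d\<in>{- int w..int w}. cmod (L d 0)) + B + cmod z"
  have "cmod (mshift (madd L (mmult (shift_pow \<gamma>) (mult_op b))) z i j) \<le> K" for i j
  proof (cases "\<bar>i - j\<bar> \<le> int w")
    case True
    have "L i j = L (i - j) 0"
      using toeplitz_if_commutes_with_shift[OF comm, of "i - j" j 0] by simp
    moreover have "cmod (L (i - j) 0) \<le> (\<Sum>d\<in>{- int w..int w}. cmod (L d 0))"
      using True by (intro member_le_sum) auto
    ultimately have "cmod (L i j) \<le> (\<Sum>d\<in>{- int w..int w}. cmod (L d 0))"
      by simp
    moreover have "cmod (if j = i - \<gamma> then b j else 0) \<le> B"
      using B \<open>0 < B\<close> by simp
    moreover have "cmod (if i = j then z else 0) \<le> cmod z"
      by simp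
    moreover have "cmod (x + y - z') \<le> cmod x + cmod y + cmod z'" for x y z' :: complex
      using norm_triangle_ineq4[of "x + y" z'] norm_triangle_ineq[of x y] by linarith
    ultimately show ?thesis
      unfolding mshift_operator_entry K_def by (meson add_mono order_trans)
  next
    case False
    then have "mshift (madd L (mmult (shift_pow \<gamma>) (mult_op b))) z i j = 0"
      using band by (simp add: band_width_def mshift_def)
    moreover have "0 \<le> K"
      using \<open>0 < B\<close> by (simp add: K_def sum_nonneg)
    ultimately show ?thesis
      by simp
  qed
  then show ?thesis
    by (rule that)
qed

theorem corollary4p7:
  fixes \<Sigma> :: "complex set" and L :: imat and \<gamma> :: int and w :: nat
    and H :: "iseq \<Rightarrow> imat" and b :: iseq
  assumes "\<Sigma> \<noteq> {}" and "compact \<Sigma>"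
    and "band_op L" and "mmult L shift = mmult shift L"
    and "\<And>u. H u = madd L (mmult (shift_pow \<gamma>) (mult_op u))"
    and "\<And>u. (\<forall>i. u i \<in> \<Sigma>) \<Longrightarrow> band_width w (H u)"
    and "\<forall>i. b i \<in> \<Sigma>"
    and "subwords UNIV b = subwords Nplus b"
  shows "(\<forall>z. inv_norm (mshift (H b) z) Nplus \<ge> inv_norm (mshift (H b) z) UNIV)
       \<and> spectrum_on (H b) Nplus \<supseteq> spectrum_on (H b) UNIV
       \<and> (\<forall>z. \<forall>N::nat. N \<ge> 1 \<longrightarrow>
            nu N (mshift (H b) z) Nplus =
              Min ({nu_win w (mshift (H b) z) (int j) (int j + int N - 1) | j. j \<in> {1..w}}
                   \<union> {nu N (mshift (H b) z) UNIV}))"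
proof -
  have H: "H b = madd L (mmult (shift_pow \<gamma>) (mult_op b))"
    using assms(5) .
  have band: "band_width w (madd L (mmult (shift_pow \<gamma>) (mult_op b)))"
    using assms(6)[OF assms(7)] unfolding H .
  have "range b \<subseteq> \<Sigma>"
    using assms(7) by auto
  then have "bounded (range b)"
    by (rule bounded_subset[OF compact_imp_bounded[OF \<open>compact \<Sigma>\<close>]])
  have pattern: "pattern_band_matrix (mshift (H b) z) b w" for z
    unfolding H by (rule pattern_band_matrix_mshift_operator[OF assms(4) band assms(8)])
  have inv: "invertible_on (mshift (H b) z) UNIV \<and>
      inv_norm (mshift (H b) z) UNIV \<le> inv_norm (mshift (H b) z) Nplus"
    if "invertible_on (mshift (H b) z) Nplus" for z
  proof -
    obtain K where "\<And>i j. cmod (mshift (H b) z i j) \<le> K"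
      using mshift_operator_entries_bounded[where z=z, OF assms(4) band \<open>bounded (range b)\<close>]
      unfolding H by blast
    from pattern_band_matrix.invertible_on_UNIV_if_invertible_on_Nplus[OF pattern this that]
    show ?thesis ..
  qed
  have "inv_norm (mshift (H b) z) UNIV \<le> inv_norm (mshift (H b) z) Nplus" for z
  proof (cases "invertible_on (mshift (H b) z) Nplus")
    case True
    then show ?thesis
      using inv by blast
  qed (simp add: inv_norm_def)
  moreover have "spectrum_on (H b) UNIV \<subseteq> spectrum_on (H b) Nplus"
    unfolding spectrum_on_def using inv by blast
  moreover have "nu N (mshift (H b) z) Nplus =
      Min ({nu_win w (mshift (H b) z) (int j) (int j + int N - 1) | j. j \<in> {1..w}}
        \<union> {nu N (mshift (H b) z) UNIV})" if "1 \<le> N" for z N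
    using pattern_band_matrix.nu_Nplus_eq[OF pattern that] .
  ultimately show ?thesis
    by simp
qed

end
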